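(* Let $n\ge1$ and $\vec p,\vec q\in[0,1]^n$ satisfy $p_i\ge q_i$ for all $i\in\{1,\dots,n\}$. Let $S_{\vec p}$ be a sum of $n$ independent random variables $X_i\sim\mathrm{Ber}(p_i)$, and similarly $S_{\vec q}$. Define $\Delta=\sum_{i=1}^n|p_i-q_i|$, $\sigma_{\vec p}^2=\sum_{i=1}^n p_i(1-p_i)$ and $\Phi(\vec p,\vec q)=\min\big(1,\Delta/\sqrt{\sigma_{\vec p}^2+1}\big)$. Then $$\mathrm{TV}(S_{\vec p},S_{\vec q})\ge\frac1{12}\,\Phi(\vec p,\vec q).$$
   Context: $\mathrm{TV}$ is the total variation distance, $\mathrm{TV}(P,Q)=\frac12\sum_\omega|P(\omega)-Q(\omega)|$, applied to the laws of the random variables. *)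

theory Defs
  imports "HOL-Probability.Probability"
begin

definition sum_bern_pmf :: "nat \<Rightarrow> (nat \<Rightarrow> real) \<Rightarrow> nat pmf" where
  "sum_bern_pmf n p =
     map_pmf (\<lambda>x. \<Sum>i<n. of_bool (x i)) (Pi_pmf {..<n} False (\<lambda>i. bernoulli_pmf (p i)))"

definition TV :: "'a pmf \<Rightarrow> 'a pmf \<Rightarrow> real" where
  "TV P Q = (1/2) * infsum (\<lambda>w. \<bar>pmf P w - pmf Q w\<bar>) UNIV"

end

theory Submission
  imports Defs
begin

text \<open>Put \<open>s = sqrt (\<sigma>\<^sub>p\<^sup>2 + 1)\<close> and let \<open>g\<close> be the ramp rising linearly from 0 to 1 over a
  window of width \<open>6 s + 1\<close> centred at the midpoint of the two means; since \<open>0 \<le> g \<le> 1\<close>,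
  \<open>TV \<ge> E g(S\<^sub>p) - E g(S\<^sub>q)\<close>. Replacing the parameters \<open>q\<^sub>j\<close> by \<open>p\<^sub>j\<close> one at a time writes this
  difference as \<open>\<Sum>\<^sub>j (p\<^sub>j - q\<^sub>j) E [g(T\<^sub>j + 1) - g(T\<^sub>j)]\<close>, where \<open>T\<^sub>j\<close> is the sum of the other \<open>n - 1\<close>
  Bernoulli variables, with parameters \<open>p\<^sub>i\<close> for \<open>i < j\<close> and \<open>q\<^sub>i\<close> for \<open>i > j\<close>. The increment
  \<open>g(k + 1) - g(k)\<close> is at least \<open>(1 - (k - a)\<^sup>2 / (3 s)\<^sup>2) / (6 s + 1)\<close>, with \<open>a\<close> the centre shifted
  by \<open>1/2\<close>, and when \<open>\<Delta> \<le> s\<close> the second moment \<open>E (T\<^sub>j - a)\<^sup>2\<close> is at most \<open>3 s\<^sup>2\<close>; so every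
  term has expectation at least \<open>1 / (12 s)\<close>. If \<open>\<Delta> > s\<close>, first move \<open>q\<close> towards \<open>p\<close> until
  \<open>\<Delta> = s\<close>: as \<open>g\<close> is monotone, this only decreases \<open>E g(S\<^sub>p) - E g(S\<^sub>q)\<close>.\<close>

lemma expectation_diff_le_TV:
  fixes P Q :: "'a pmf" and g :: "'a \<Rightarrow> real"
  assumes "finite (set_pmf P)" "finite (set_pmf Q)" and g: "\<And>w. 0 \<le> g w \<and> g w \<le> 1"
  shows "measure_pmf.expectation P g - measure_pmf.expectation Q g \<le> TV P Q"
proof -
  define A where "A = set_pmf P \<union> set_pmf Q"
  define d where "d w = pmf P w - pmf Q w" for w
  have A: "finite A" using assms(1,2) by (simp add: A_def)
  have d_outside: "d w = 0" if "w \<notin> A" for w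
    using that by (simp add: A_def d_def set_pmf_iff)
  have "infsum (\<lambda>w. \<bar>d w\<bar>) UNIV = infsum (\<lambda>w. \<bar>d w\<bar>) A"
    by (rule infsum_cong_neutral) (auto simp: d_outside)
  then have TV: "TV P Q = (\<Sum>w\<in>A. \<bar>d w\<bar>) / 2"
    using A by (simp add: TV_def d_def[abs_def])
  have sum_d: "(\<Sum>w\<in>A. d w) = 0"
    using sum_pmf_eq_1[OF A, of P] sum_pmf_eq_1[OF A, of Q]
    by (simp add: A_def d_def sum_subtractf)
  have "measure_pmf.expectation P g - measure_pmf.expectation Q g = (\<Sum>w\<in>A. g w * d w)"
    using A by (simp add: A_def d_def integral_measure_pmf_real[of A] sum_subtractf right_diff_distrib)
  also have "\<dots> \<le> (\<Sum>w\<in>A. (\<bar>d w\<bar> + d w) / 2)"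
  proof (rule sum_mono)
    fix w
    show "g w * d w \<le> (\<bar>d w\<bar> + d w) / 2"
      using g[of w] mult_left_le[of "g w" "d w"] mult_nonneg_nonpos[of "g w" "d w"]
      by (cases "d w \<ge> 0") (auto simp: mult.commute)
  qed
  also have "\<dots> = TV P Q"
    using sum_d by (simp add: TV sum.distrib add_divide_distrib[symmetric] sum_divide_distrib[symmetric])
  finally show ?thesis .
qed

definition ramp :: "real \<Rightarrow> real \<Rightarrow> real \<Rightarrow> real" where
  "ramp c w t = min 1 (max 0 ((t - c) / w + 1/2))"

lemma ramp_bounds: "0 \<le> ramp c w t \<and> ramp c w t \<le> 1"
  by (simp add: ramp_def)

lemma ramp_mono: "w > 0 \<Longrightarrow> s \<le> t \<Longrightarrow> ramp c w s \<le> ramp c w t"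
  unfolding ramp_def by (intro min.mono max.mono add_right_mono divide_right_mono) auto

lemma ramp_increment_ge:
  fixes R c t :: real
  assumes R: "R > 0"
  shows "(1 - (t + 1/2 - c)\<^sup>2 / R\<^sup>2) / (2 * R + 1) \<le> ramp c (2 * R + 1) (t + 1) - ramp c (2 * R + 1) t"
proof (cases "\<bar>t + 1/2 - c\<bar> \<le> R")
  case True
  let ?w = "2 * R + 1"
  have w: "?w > 0" using R by simp
  have "0 \<le> (t - c) / ?w + 1/2" "(t + 1 - c) / ?w + 1/2 \<le> 1"
    using True w by (auto simp: field_simps abs_le_iff)
  moreover have "(t - c) / ?w \<le> (t + 1 - c) / ?w"
    using w by (intro divide_right_mono) auto
  ultimately have "ramp c ?w (t + 1) - ramp c ?w t = (t + 1 - c) / ?w - (t - c) / ?w"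
    by (simp add: ramp_def)
  also have "\<dots> = 1 / ?w"
    by (simp add: diff_divide_distrib[symmetric])
  finally have "ramp c ?w (t + 1) - ramp c ?w t = 1 / ?w" .
  moreover have "(1 - (t + 1/2 - c)\<^sup>2 / R\<^sup>2) / ?w \<le> 1 / ?w"
    using R by (intro divide_right_mono) auto
  ultimately show ?thesis by simp
next
  case False
  then have "R\<^sup>2 < (t + 1/2 - c)\<^sup>2"
    using R by (metis abs_le_square_iff abs_of_pos not_le)
  then have "(1 - (t + 1/2 - c)\<^sup>2 / R\<^sup>2) / (2 * R + 1) \<le> 0"
    using R by (intro divide_nonpos_pos) auto
  also have "\<dots> \<le> ramp c (2 * R + 1) (t + 1) - ramp c (2 * R + 1) t"
    using ramp_mono[of "2 * R + 1" t "t + 1" c] R by simp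
  finally show ?thesis .
qed

lemma set_sum_bern_pmf: "set_pmf (sum_bern_pmf n x) \<subseteq> {..n}"
proof -
  have "(\<Sum>i<n. of_bool (f i)) \<le> n" for f :: "nat \<Rightarrow> bool"
    using sum_bounded_above[of "{..<n}" "\<lambda>i. of_bool (f i) :: nat" 1] by simp
  then show ?thesis unfolding sum_bern_pmf_def by auto
qed

lemma sum_bern_pmf_0: "sum_bern_pmf 0 x = return_pmf 0"
  unfolding sum_bern_pmf_def by simp

lemma sum_bern_pmf_Suc:
  "sum_bern_pmf (Suc n) x =
     map_pmf (\<lambda>(b, s). s + of_bool b) (pair_pmf (bernoulli_pmf (x n)) (sum_bern_pmf n x))"
proof -
  have sum_upd: "(\<Sum>i<Suc n. of_bool ((f(n := b)) i)) = (\<Sum>i<n. of_bool (f i)) + (of_bool b :: nat)"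
    for f b by (simp add: sum.cong)
  have "Pi_pmf {..<Suc n} False (\<lambda>i. bernoulli_pmf (x i)) =
     map_pmf (\<lambda>(b, f). f(n := b))
       (pair_pmf (bernoulli_pmf (x n)) (Pi_pmf {..<n} False (\<lambda>i. bernoulli_pmf (x i))))"
    unfolding lessThan_Suc by (rule Pi_pmf_insert) auto
  then show ?thesis
    unfolding sum_bern_pmf_def
    by (simp only: pmf.map_comp pair_map_pmf2 o_def case_prod_beta sum_upd apsnd_def
        map_prod_def fst_conv snd_conv id_apply)
qed

lemma sum_bern_pmf_cong: "(\<And>i. i < n \<Longrightarrow> x i = y i) \<Longrightarrow> sum_bern_pmf n x = sum_bern_pmf n y"
  unfolding sum_bern_pmf_def by (intro arg_cong[where f = "map_pmf _"] Pi_pmf_cong) auto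

definition E_sum_bern :: "nat \<Rightarrow> (nat \<Rightarrow> real) \<Rightarrow> (nat \<Rightarrow> real) \<Rightarrow> real" where
  "E_sum_bern n x g = measure_pmf.expectation (sum_bern_pmf n x) g"

lemma E_sum_bern_eq_sum: "E_sum_bern n x g = (\<Sum>k\<le>n. g k * pmf (sum_bern_pmf n x) k)"
  unfolding E_sum_bern_def using set_sum_bern_pmf by (intro integral_measure_pmf_real) auto

lemma E_sum_bern_const: "E_sum_bern n x (\<lambda>_. c) = c"
  using sum_pmf_eq_1[OF _ set_sum_bern_pmf, of n x]
  by (simp add: E_sum_bern_eq_sum sum_distrib_left[symmetric])

lemma E_sum_bern_affine: "E_sum_bern n x (\<lambda>k. a + b * f k) = a + b * E_sum_bern n x f"
  using E_sum_bern_const[of n x a]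
  unfolding E_sum_bern_eq_sum by (simp add: distrib_right sum.distrib sum_distrib_left mult.assoc)

lemma E_sum_bern_diff: "E_sum_bern n x (\<lambda>k. f k - h k) = E_sum_bern n x f - E_sum_bern n x h"
  by (simp add: E_sum_bern_eq_sum sum_subtractf left_diff_distrib)

lemma E_sum_bern_mono: "(\<And>k. f k \<le> h k) \<Longrightarrow> E_sum_bern n x f \<le> E_sum_bern n x h"
  unfolding E_sum_bern_eq_sum by (intro sum_mono mult_right_mono) auto

lemma E_sum_bern_cong: "(\<And>i. i < n \<Longrightarrow> x i = y i) \<Longrightarrow> E_sum_bern n x = E_sum_bern n y"
  using sum_bern_pmf_cong[of n x y] by (simp add: E_sum_bern_def[abs_def])

lemma E_sum_bern_0: "E_sum_bern 0 x g = g 0"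
  unfolding E_sum_bern_def sum_bern_pmf_0 by simp

definition bern_params :: "nat \<Rightarrow> (nat \<Rightarrow> real) \<Rightarrow> bool" where
  "bern_params n x \<longleftrightarrow> (\<forall>i<n. 0 \<le> x i \<and> x i \<le> 1)"

lemma E_sum_bern_Suc:
  assumes "0 \<le> x n" "x n \<le> 1"
  shows "E_sum_bern (Suc n) x g =
           (1 - x n) * E_sum_bern n x g + x n * E_sum_bern n x (\<lambda>k. g (Suc k))"
proof -
  let ?M = "pair_pmf (bernoulli_pmf (x n)) (sum_bern_pmf n x)"
  have "E_sum_bern (Suc n) x g = measure_pmf.expectation ?M (\<lambda>(b, k). g (k + of_bool b))"
    unfolding E_sum_bern_def sum_bern_pmf_Suc by (simp add: case_prod_beta')
  also have "\<dots> = (\<Sum>bk\<in>UNIV \<times> {..n}. (\<lambda>(b, k). g (k + of_bool b)) bk * pmf ?M bk)"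
    using set_sum_bern_pmf[of n x] by (intro integral_measure_pmf_real) (auto simp: set_pair_pmf)
  also have "\<dots> = (\<Sum>b\<in>UNIV. \<Sum>k\<le>n. g (k + of_bool b) *
                     (pmf (bernoulli_pmf (x n)) b * pmf (sum_bern_pmf n x) k))"
    by (subst sum.cartesian_product) (auto simp: pmf_pair intro!: sum.cong)
  also have "\<dots> = (1 - x n) * (\<Sum>k\<le>n. g k * pmf (sum_bern_pmf n x) k)
                 + x n * (\<Sum>k\<le>n. g (Suc k) * pmf (sum_bern_pmf n x) k)"
    using assms by (simp add: UNIV_bool sum_distrib_left algebra_simps)
  finally show ?thesis by (simp add: E_sum_bern_eq_sum)
qed

lemma E_sum_bern_square_dev:
  "bern_params n x \<Longrightarrow>
     E_sum_bern n x (\<lambda>k. (real k - a)\<^sup>2) = (\<Sum>i<n. x i * (1 - x i)) + ((\<Sum>i<n. x i) - a)\<^sup>2"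
proof (induction n arbitrary: a)
  case 0
  then show ?case by (simp add: E_sum_bern_0)
next
  case (Suc n)
  have x_n: "0 \<le> x n" "x n \<le> 1" and params: "bern_params n x"
    using Suc.prems by (auto simp: bern_params_def)
  have shift: "(\<lambda>k. (real (Suc k) - a)\<^sup>2) = (\<lambda>k. (real k - (a - 1))\<^sup>2)"
    by (simp add: algebra_simps)
  show ?case
    unfolding E_sum_bern_Suc[of x n, OF x_n] shift Suc.IH[OF params]
    by (simp add: power2_eq_square algebra_simps)
qed

lemma E_sum_bern_coordinate:
  assumes "bern_params n x" "j < n"
  shows "E_sum_bern n x g =
           (1 - x j) * E_sum_bern n (x(j := 0)) g + x j * E_sum_bern n (x(j := 0)) (\<lambda>k. g (Suc k))"
  using assms
proof (induction n arbitrary: g)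
  case 0
  then show ?case by simp
next
  case (Suc n)
  have x_n: "0 \<le> x n" "x n \<le> 1" and params: "bern_params n x"
    using Suc.prems(1) by (auto simp: bern_params_def)
  show ?case
  proof (cases "j = n")
    case True
    have drop: "E_sum_bern (Suc n) (x(j := 0)) h = E_sum_bern n x h" for h
    proof -
      have "E_sum_bern n (x(j := 0)) = E_sum_bern n x"
        using True by (intro E_sum_bern_cong) simp
      then show ?thesis using E_sum_bern_Suc[of "x(j := 0)" n h] True by simp
    qed
    show ?thesis unfolding drop E_sum_bern_Suc[of x n, OF x_n] using True by simp
  next
    case False
    let ?y = "x(j := 0)"
    have IH: "E_sum_bern n x h = (1 - x j) * E_sum_bern n ?y h + x j * E_sum_bern n ?y (\<lambda>k. h (Suc k))"
      for h
      using Suc.prems(2) False by (intro Suc.IH[OF params]) simp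
    have y_n: "?y n = x n" using False by simp
    have Suc_y: "E_sum_bern (Suc n) ?y h =
                   (1 - x n) * E_sum_bern n ?y h + x n * E_sum_bern n ?y (\<lambda>k. h (Suc k))" for h
      using E_sum_bern_Suc[of ?y n h] x_n unfolding y_n by blast
    show ?thesis
      unfolding E_sum_bern_Suc[of x n, OF x_n] IH Suc_y by (simp add: algebra_simps)
  qed
qed

text \<open>Parameter 0 switches the \<open>j\<close>-th variable off, so \<open>sum_bern_pmf n (hybrid x y j)\<close> is the law
  of \<open>T\<^sub>j\<close>.\<close>
definition hybrid :: "(nat \<Rightarrow> real) \<Rightarrow> (nat \<Rightarrow> real) \<Rightarrow> nat \<Rightarrow> nat \<Rightarrow> real" where
  "hybrid x y j i = (if i < j then x i else if i = j then 0 else y i)"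

lemma bern_params_hybrid: "bern_params n x \<Longrightarrow> bern_params n y \<Longrightarrow> bern_params n (hybrid x y j)"
  unfolding bern_params_def hybrid_def by auto

lemma E_sum_bern_diff_eq_sum_hybrid:
  assumes x: "bern_params n x" and y: "bern_params n y"
  shows "E_sum_bern n x g - E_sum_bern n y g =
           (\<Sum>j<n. (x j - y j) * E_sum_bern n (hybrid x y j) (\<lambda>k. g (Suc k) - g k))"
proof -
  define z where "z j i = (if i < j then x i else y i)" for j i
  have z: "bern_params n (z j)" for j
    using x y by (simp add: bern_params_def z_def)
  have step: "E_sum_bern n (z (Suc j)) g - E_sum_bern n (z j) g =
                (x j - y j) * E_sum_bern n (hybrid x y j) (\<lambda>k. g (Suc k) - g k)" if "j < n" for j
  proof -
    have "(z (Suc j))(j := 0) = hybrid x y j" "(z j)(j := 0) = hybrid x y j"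
      by (auto simp: z_def hybrid_def fun_eq_iff)
    then show ?thesis
      using E_sum_bern_coordinate[OF z that, of "Suc j" g] E_sum_bern_coordinate[OF z that, of j g]
      by (simp add: z_def E_sum_bern_diff algebra_simps)
  qed
  have "(\<Sum>j<n. (x j - y j) * E_sum_bern n (hybrid x y j) (\<lambda>k. g (Suc k) - g k)) =
        (\<Sum>j<n. E_sum_bern n (z (Suc j)) g - E_sum_bern n (z j) g)"
    by (simp add: step)
  also have "\<dots> = E_sum_bern n (z n) g - E_sum_bern n (z 0) g"
    by (rule sum_lessThan_telescope)
  also have "\<dots> = E_sum_bern n x g - E_sum_bern n y g"
    using E_sum_bern_cong[of n "z n" x] by (simp add: z_def[abs_def])
  finally show ?thesis by simp
qed

lemma E_sum_bern_mono_params: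
  assumes "bern_params n x" "bern_params n y" "\<And>i. i < n \<Longrightarrow> y i \<le> x i" "mono g"
  shows "E_sum_bern n y g \<le> E_sum_bern n x g"
proof -
  have "0 \<le> E_sum_bern n (hybrid x y j) (\<lambda>k. g (Suc k) - g k)" for j
    using E_sum_bern_mono[of "\<lambda>_. 0" "\<lambda>k. g (Suc k) - g k"] \<open>mono g\<close>
    by (simp add: E_sum_bern_const monoD)
  then have "0 \<le> (\<Sum>j<n. (x j - y j) * E_sum_bern n (hybrid x y j) (\<lambda>k. g (Suc k) - g k))"
    using assms(3) by (intro sum_nonneg mult_nonneg_nonneg) auto
  then show ?thesis
    using E_sum_bern_diff_eq_sum_hybrid[OF assms(1,2), of g] by simp
qed

lemma E_sum_bern_ramp_increment_ge:
  assumes x: "bern_params n x" and R: "R > 0"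
  shows "(1 - ((\<Sum>i<n. x i * (1 - x i)) + ((\<Sum>i<n. x i) + 1/2 - c)\<^sup>2) / R\<^sup>2) / (2 * R + 1)
           \<le> E_sum_bern n x (\<lambda>k. ramp c (2 * R + 1) (real (Suc k)) - ramp c (2 * R + 1) (real k))"
proof -
  define w where "w = 2 * R + 1"
  have "w > 0" using R by (simp add: w_def)
  have pointwise: "1 / w + (- 1 / (w * R\<^sup>2)) * (real k - (c - 1/2))\<^sup>2
                     \<le> ramp c w (real (Suc k)) - ramp c w (real k)" for k
  proof -
    have "1 / w + (- 1 / (w * R\<^sup>2)) * (real k - (c - 1/2))\<^sup>2 = (1 - (real k + 1/2 - c)\<^sup>2 / R\<^sup>2) / w"
      using \<open>w > 0\<close> R by (simp add: field_simps)
    then show ?thesis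
      using ramp_increment_ge[OF R, of "real k" c] by (simp add: w_def add.commute)
  qed
  have "(1 - ((\<Sum>i<n. x i * (1 - x i)) + ((\<Sum>i<n. x i) + 1/2 - c)\<^sup>2) / R\<^sup>2) / w
      = E_sum_bern n x (\<lambda>k. 1 / w + (- 1 / (w * R\<^sup>2)) * (real k - (c - 1/2))\<^sup>2)"
    unfolding E_sum_bern_affine E_sum_bern_square_dev[OF x] using \<open>w > 0\<close> R
    by (simp add: field_simps)
  also have "\<dots> \<le> E_sum_bern n x (\<lambda>k. ramp c w (real (Suc k)) - ramp c w (real k))"
    by (rule E_sum_bern_mono[OF pointwise])
  finally show ?thesis by (simp add: w_def)
qed

lemma sum_hybrid_variance_le:
  assumes p: "bern_params n p" and q: "\<And>i. i < n \<Longrightarrow> 0 \<le> q i \<and> q i \<le> p i"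
  shows "(\<Sum>i<n. hybrid p q j i * (1 - hybrid p q j i))
           \<le> (\<Sum>i<n. p i * (1 - p i)) + (\<Sum>i<n. p i - q i)"
proof -
  have "hybrid p q j i * (1 - hybrid p q j i) \<le> p i * (1 - p i) + (p i - q i)" if "i < n" for i
  proof -
    have p_i: "0 \<le> p i" "p i \<le> 1" and q_i: "0 \<le> q i" "q i \<le> p i"
      using p q that by (auto simp: bern_params_def)
    have "0 \<le> (p i - q i) * (2 - p i - q i)"
      using p_i q_i by (intro mult_nonneg_nonneg) auto
    then have "q i * (1 - q i) \<le> p i * (1 - p i) + (p i - q i)"
      by (simp add: algebra_simps)
    with p_i q_i show ?thesis by (auto simp: hybrid_def)
  qed
  then show ?thesis unfolding sum.distrib[symmetric] by (intro sum_mono) auto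
qed

lemma sum_hybrid_bounds:
  assumes q: "bern_params n q" and le: "\<And>i. i < n \<Longrightarrow> q i \<le> p i" and "j < n"
  shows "(\<Sum>i<n. q i) - 1 \<le> (\<Sum>i<n. hybrid p q j i)" and "(\<Sum>i<n. hybrid p q j i) \<le> (\<Sum>i<n. p i)"
proof -
  have "(\<Sum>i<n. q i) - 1 = (\<Sum>i<n. q i - of_bool (i = j))"
    using \<open>j < n\<close> by (simp add: sum_subtractf)
  also have "\<dots> \<le> (\<Sum>i<n. hybrid p q j i)"
    using q le by (intro sum_mono) (auto simp: hybrid_def bern_params_def)
  finally show "(\<Sum>i<n. q i) - 1 \<le> (\<Sum>i<n. hybrid p q j i)" .
  show "(\<Sum>i<n. hybrid p q j i) \<le> (\<Sum>i<n. p i)"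
    using q le by (intro sum_mono) (force simp: hybrid_def bern_params_def)
qed

lemma E_sum_bern_hybrid_ramp_increment_ge:
  assumes p: "bern_params n p" and q: "bern_params n q" and le: "\<And>i. i < n \<Longrightarrow> q i \<le> p i"
    and s: "s\<^sup>2 = (\<Sum>i<n. p i * (1 - p i)) + 1" "s > 0"
    and close: "(\<Sum>i<n. p i - q i) \<le> s"
    and c: "c = ((\<Sum>i<n. p i) + (\<Sum>i<n. q i)) / 2" and "j < n"
  shows "1 / (12 * s) \<le>
           E_sum_bern n (hybrid p q j) (\<lambda>k. ramp c (6 * s + 1) (real (Suc k)) - ramp c (6 * s + 1) (real k))"
proof -
  define V where "V = (\<Sum>i<n. hybrid p q j i * (1 - hybrid p q j i))"
  define M where "M = (\<Sum>i<n. hybrid p q j i)"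
  have "0 \<le> (\<Sum>i<n. p i * (1 - p i))" using p by (auto simp: bern_params_def intro!: sum_nonneg)
  then have "1 \<le> s" using power2_le_imp_le[of 1 s] s by simp
  then have "s \<le> s\<^sup>2" using mult_right_mono[of 1 s s] by (simp add: power2_eq_square)
  have "V \<le> (\<Sum>i<n. p i * (1 - p i)) + (\<Sum>i<n. p i - q i)"
    using sum_hybrid_variance_le[OF p, of q j] q le by (auto simp: V_def bern_params_def)
  also have "\<dots> \<le> 2 * s\<^sup>2"
    using s(1) close \<open>s \<le> s\<^sup>2\<close> by simp
  finally have V: "V \<le> 2 * s\<^sup>2" .
  have "\<bar>M + 1/2 - c\<bar> \<le> ((\<Sum>i<n. p i - q i) + 1) / 2"
    using sum_hybrid_bounds[OF q le \<open>j < n\<close>] by (simp add: M_def c sum_subtractf abs_le_iff field_simps)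
  also have "\<dots> \<le> s"
    using close \<open>1 \<le> s\<close> by simp
  finally have "(M + 1/2 - c)\<^sup>2 \<le> s\<^sup>2"
    by (simp add: abs_le_square_iff[symmetric] abs_of_pos s(2))
  with V have second_moment: "V + (M + 1/2 - c)\<^sup>2 \<le> 3 * s\<^sup>2" by simp
  have "1 / (12 * s) \<le> (1 - 3 * s\<^sup>2 / (3 * s)\<^sup>2) / (2 * (3 * s) + 1)"
    using \<open>1 \<le> s\<close> by (simp add: power2_eq_square field_simps)
  also have "\<dots> \<le> (1 - (V + (M + 1/2 - c)\<^sup>2) / (3 * s)\<^sup>2) / (2 * (3 * s) + 1)"
    using second_moment s(2) by (intro divide_right_mono diff_left_mono) auto
  also have "\<dots> \<le> E_sum_bern n (hybrid p q j)
                   (\<lambda>k. ramp c (6 * s + 1) (real (Suc k)) - ramp c (6 * s + 1) (real k))"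
    using E_sum_bern_ramp_increment_ge[OF bern_params_hybrid[OF p q], where R = "3 * s" and c = c] s(2)
    by (simp add: V_def M_def)
  finally show ?thesis .
qed

lemma E_sum_bern_ramp_diff_ge:
  assumes p: "bern_params n p" and q: "bern_params n q" and le: "\<And>i. i < n \<Longrightarrow> q i \<le> p i"
    and s: "s\<^sup>2 = (\<Sum>i<n. p i * (1 - p i)) + 1" "s > 0"
    and close: "(\<Sum>i<n. p i - q i) \<le> s"
  shows "(\<Sum>i<n. p i - q i) / (12 * s) \<le>
           E_sum_bern n p (\<lambda>k. ramp (((\<Sum>i<n. p i) + (\<Sum>i<n. q i)) / 2) (6 * s + 1) (real k))
         - E_sum_bern n q (\<lambda>k. ramp (((\<Sum>i<n. p i) + (\<Sum>i<n. q i)) / 2) (6 * s + 1) (real k))"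
proof -
  define c where "c = ((\<Sum>i<n. p i) + (\<Sum>i<n. q i)) / 2"
  define g where "g = (\<lambda>k. ramp c (6 * s + 1) (real k))"
  have "(\<Sum>i<n. p i - q i) / (12 * s) = (\<Sum>j<n. (p j - q j) * (1 / (12 * s)))"
    by (simp add: sum_divide_distrib)
  also have "\<dots> \<le> (\<Sum>j<n. (p j - q j) * E_sum_bern n (hybrid p q j) (\<lambda>k. g (Suc k) - g k))"
    using E_sum_bern_hybrid_ramp_increment_ge[OF p q le s close c_def] le
    by (intro sum_mono mult_left_mono) (auto simp: g_def)
  also have "\<dots> = E_sum_bern n p g - E_sum_bern n q g"
    by (rule E_sum_bern_diff_eq_sum_hybrid[OF p q, symmetric])
  finally show ?thesis by (simp add: g_def c_def)
qed

lemma obtain_params_between: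
  fixes p q :: "nat \<Rightarrow> real"
  assumes le: "\<And>i. i < n \<Longrightarrow> q i \<le> p i" and t: "0 \<le> t" "t \<le> (\<Sum>i<n. p i - q i)"
  obtains r where "\<And>i. i < n \<Longrightarrow> q i \<le> r i \<and> r i \<le> p i" and "(\<Sum>i<n. p i - r i) = t"
proof -
  define \<Delta> where "\<Delta> = (\<Sum>i<n. p i - q i)"
  define \<theta> where "\<theta> = t / \<Delta>"
  define r where "r i = p i - \<theta> * (p i - q i)" for i
  have "t \<le> \<Delta>" using t(2) by (simp add: \<Delta>_def)
  then have \<theta>: "0 \<le> \<theta>" "\<theta> \<le> 1"
    using t(1) by (auto simp: \<theta>_def divide_le_eq_1)
  have "\<theta> * \<Delta> = t"
  proof (cases "\<Delta> = 0")
    case True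
    \<comment> \<open>then \<open>t = 0\<close>, and \<open>\<theta> = t / 0 = 0\<close>\<close>
    then show ?thesis using t(1) \<open>t \<le> \<Delta>\<close> by simp
  qed (simp add: \<theta>_def)
  have "q i \<le> r i \<and> r i \<le> p i" if "i < n" for i
    using le[OF that] \<theta> mult_left_le_one_le[of "p i - q i" \<theta>] by (simp add: r_def)
  moreover have "(\<Sum>i<n. p i - r i) = t"
    using \<open>\<theta> * \<Delta> = t\<close> by (simp add: r_def \<Delta>_def sum_distrib_left)
  ultimately show thesis by (rule that)
qed

theorem theorem2:
  fixes n :: nat and p q :: "nat \<Rightarrow> real"
  assumes "n \<ge> 1"
    and "\<And>i. i < n \<Longrightarrow> 0 \<le> p i \<and> p i \<le> 1"
    and "\<And>i. i < n \<Longrightarrow> 0 \<le> q i \<and> q i \<le> 1"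
    and "\<And>i. i < n \<Longrightarrow> p i \<ge> q i"
  shows "TV (sum_bern_pmf n p) (sum_bern_pmf n q) \<ge>
           (1/12) * min 1 ((\<Sum>i<n. \<bar>p i - q i\<bar>) / sqrt ((\<Sum>i<n. p i * (1 - p i)) + 1))"
proof -
  define \<Delta> where "\<Delta> = (\<Sum>i<n. p i - q i)"
  define s where "s = sqrt ((\<Sum>i<n. p i * (1 - p i)) + 1)"
  have p: "bern_params n p" and q: "bern_params n q"
    using assms(2,3) by (auto simp: bern_params_def)
  have "0 \<le> (\<Sum>i<n. p i * (1 - p i))" using assms(2) by (intro sum_nonneg) auto
  then have s: "s\<^sup>2 = (\<Sum>i<n. p i * (1 - p i)) + 1" "s > 0" by (simp_all add: s_def)
  have "0 \<le> \<Delta>" using assms(4) by (auto simp: \<Delta>_def intro!: sum_nonneg)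
  then obtain r where r: "\<And>i. i < n \<Longrightarrow> q i \<le> r i \<and> r i \<le> p i"
    and gap: "(\<Sum>i<n. p i - r i) = min \<Delta> s"
    using obtain_params_between[of n q p "min \<Delta> s"] assms(4) s(2) by (auto simp: \<Delta>_def)
  have r_params: "bern_params n r" using p q r by (force simp: bern_params_def)
  define g where "g = (\<lambda>k. ramp (((\<Sum>i<n. p i) + (\<Sum>i<n. r i)) / 2) (6 * s + 1) (real k))"
  have "mono g" using s(2) by (auto simp: g_def intro!: monoI ramp_mono)
  have "(1/12) * min 1 (\<Delta> / s) = min \<Delta> s / (12 * s)"
    using s(2) by (simp add: min_def field_simps)
  also have "\<dots> \<le> E_sum_bern n p g - E_sum_bern n r g"
    using E_sum_bern_ramp_diff_ge[OF p r_params _ s] r gap by (simp add: g_def)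
  also have "\<dots> \<le> E_sum_bern n p g - E_sum_bern n q g"
    using E_sum_bern_mono_params[OF r_params q _ \<open>mono g\<close>] r by simp
  also have "\<dots> \<le> TV (sum_bern_pmf n p) (sum_bern_pmf n q)"
    unfolding E_sum_bern_def using set_sum_bern_pmf ramp_bounds
    by (intro expectation_diff_le_TV) (auto simp: g_def intro: finite_subset)
  finally show ?thesis
    using assms(4) by (simp add: \<Delta>_def s_def)
qed

end
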